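(* Let $p$ be a prime and let $f:\mathbb{Z}_p\times\mathbb{Z}_p\to\mathbb{Z}_p$ be additively inseparable. Then for all $n,m\ge1$ and every function $F:\mathbb{Z}_p^n\times\mathbb{Z}_p^m\to\mathbb{Z}_p$ there is a protocol with the following properties. Alice, holding $\vec x\in\mathbb{Z}_p^n$, and Bob, holding $\vec y\in\mathbb{Z}_p^m$, share finitely many copies of $P^f$ and shared randomness, and do not communicate. On every input, Alice outputs $a$ and Bob outputs $b$ with $a-b=F(\vec x,\vec y)$ with probability $1$. Consequently, given access to copies of $P^f$, Bob can compute $F(\vec x,\vec y)$ with certainty after Alice sends him a single element of $\mathbb{Z}_p$. Thus the deterministic communication complexity of every such $F$ becomes trivial.
   Context: Let $p$ be a prime. All arithmetic on elements of $\mathbb{Z}_p$ is modulo $p$. A box is a conditional probability distribution $P(a,b\mid x,y)$ with $a,b,x,y\in\mathbb{Z}_p$. It is shared by Alice, who supplies $x$ and receives $a$, and Bob, who supplies $y$ and receives $b$. Different copies act independently. For $f:\mathbb{Z}_p\times\mathbb{Z}_p\to\mathbb{Z}_p$, the functional box is $P^f(a,b\mid x,y)=1/p$ if $a-b=f(x,y)$, and $0$ otherwise. A function $f$ is additively separable if $f(x,y)=g(x)+h(y)$ for some $g,h:\mathbb{Z}_p\to\mathbb{Z}_p$. Otherwise it is additively inseparable. In a protocol, each party's inputs to the box copies may depend on their own input, the shared randomness, and their own previously obtained box outputs. *)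

theory Defs
  imports "HOL-Probability.Probability" "HOL-Number_Theory.Cong"
begin

text \<open>Elements of Z_p are represented by integers; all comparisons are modulo p.
  Box inputs are reduced modulo p, box outputs lie in {0..<p}.\<close>

definition additively_separable :: "nat \<Rightarrow> (int \<Rightarrow> int \<Rightarrow> int) \<Rightarrow> bool" where
  "additively_separable p f \<longleftrightarrow>
     (\<exists>g h :: int \<Rightarrow> int. \<forall>x\<in>{0..<int p}. \<forall>y\<in>{0..<int p}.
        [f x y = g x + h y] (mod int p))"

text \<open>One use of a copy of the functional box P^f on inputs x, y:
  a is uniform on Z_p and b = a - f(x,y), i.e. P(a,b|x,y) = 1/p iff a - b = f(x,y).\<close>
definition functional_box :: "nat \<Rightarrow> (int \<Rightarrow> int \<Rightarrow> int) \<Rightarrow> int \<Rightarrow> int \<Rightarrow> (int \<times> int) pmf" where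
  "functional_box p f x y =
     map_pmf (\<lambda>a. (a, (a - f (x mod int p) (y mod int p)) mod int p)) (pmf_of_set {0..<int p})"

text \<open>Alice's input to the next copy depends on
  her input xs, the shared randomness r and her previous box outputs; likewise for Bob.\<close>
fun run_boxes ::
  "nat \<Rightarrow> (int \<Rightarrow> int \<Rightarrow> int)
   \<Rightarrow> (int list \<Rightarrow> nat \<Rightarrow> int list \<Rightarrow> int) \<Rightarrow> (int list \<Rightarrow> nat \<Rightarrow> int list \<Rightarrow> int)
   \<Rightarrow> int list \<Rightarrow> int list \<Rightarrow> nat \<Rightarrow> nat \<Rightarrow> (int list \<times> int list) pmf" where
  "run_boxes p f inA inB xs ys r 0 = return_pmf ([], [])"
| "run_boxes p f inA inB xs ys r (Suc j) =
     bind_pmf (run_boxes p f inA inB xs ys r j) (\<lambda>(as, bs).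
       map_pmf (\<lambda>(a, b). (as @ [a], bs @ [b]))
         (functional_box p f (inA xs r as) (inB ys r bs)))"

definition protocol_outcome ::
  "nat \<Rightarrow> (int \<Rightarrow> int \<Rightarrow> int) \<Rightarrow> nat \<Rightarrow> nat pmf
   \<Rightarrow> (int list \<Rightarrow> nat \<Rightarrow> int list \<Rightarrow> int) \<Rightarrow> (int list \<Rightarrow> nat \<Rightarrow> int list \<Rightarrow> int)
   \<Rightarrow> (int list \<Rightarrow> nat \<Rightarrow> int list \<Rightarrow> int) \<Rightarrow> (int list \<Rightarrow> nat \<Rightarrow> int list \<Rightarrow> int)
   \<Rightarrow> int list \<Rightarrow> int list \<Rightarrow> (int \<times> int) pmf" where
  "protocol_outcome p f k R inA inB outA outB xs ys =
     bind_pmf R (\<lambda>r. map_pmf (\<lambda>(as, bs). (outA xs r as, outB ys r bs))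
                              (run_boxes p f inA inB xs ys r k))"

definition Zp_vectors :: "nat \<Rightarrow> nat \<Rightarrow> int list set" where
  "Zp_vectors p n = {v. length v = n \<and> set v \<subseteq> {0..<int p}}"

end

theory Submission
  imports Defs
begin

(* Inseparability of f yields x1, y1 whose "mixed difference"
     D = f x1 y1 - f x1 0 - f 0 y1 + f 0 0
   is nonzero mod p.  Restricted to the square {0,x1} x {0,y1}, f is affine plus
   u*v*D (u, v the 0/1 indicators of the inputs), so after local affine corrections
   each box copy produces an additive sharing of u*v*D, i.e. a nonlocal AND.
   The protocol enumerates all input pairs (x_i, y_i) as a list L and uses one box copy
   per entry: Alice inputs x1 iff her input is x_i, Bob inputs y1 iff his input is y_i.
   Exactly one copy sees both indicators equal to 1, so a linear combination of the
   corrected outputs with coefficients F(x_i, y_i) * D^(-1) is a sharing of F(xs, ys). *)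

lemma run_boxes_correlation:
  "\<forall>(as, bs)\<in>set_pmf (run_boxes p f inA inB xs ys r k).
     length as = k \<and> length bs = k \<and>
     (\<forall>i<k. [as!i - bs!i = f (inA xs r (take i as) mod int p) (inB ys r (take i bs) mod int p)]
              (mod int p))"
proof (induction k)
  case 0
  then show ?case by simp
next
  case (Suc k)
  show ?case
  proof (clarsimp simp del: run_boxes.simps)
    fix as' bs'
    assume "(as', bs') \<in> set_pmf (run_boxes p f inA inB xs ys r (Suc k))"
    then obtain as bs a where prev: "(as, bs) \<in> set_pmf (run_boxes p f inA inB xs ys r k)"
      and as': "as' = as @ [a]"
      and bs': "bs' = bs @ [(a - f (inA xs r as mod int p) (inB ys r bs mod int p)) mod int p]"
      by (auto simp: functional_box_def)
    from Suc.IH prev have len: "length as = k" "length bs = k"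
      and old: "\<forall>i<k. [as!i - bs!i = f (inA xs r (take i as) mod int p)
                                       (inB ys r (take i bs) mod int p)] (mod int p)"
      by auto
    have new: "[a - (a - t) mod int p = t] (mod int p)" for t :: int
      by (simp add: cong_def mod_diff_right_eq)
    show "length as' = Suc k \<and> length bs' = Suc k \<and>
      (\<forall>i<Suc k. [as' ! i - bs' ! i = f (inA xs r (take i as') mod int p)
                                        (inB ys r (take i bs') mod int p)] (mod int p))"
      using old new len by (auto simp: as' bs' nth_append less_Suc_eq)
  qed
qed

lemma protocol_prob_one:
  assumes "\<And>r as bs. r \<in> set_pmf R \<Longrightarrow> (as, bs) \<in> set_pmf (run_boxes p f inA inB xs ys r k)
             \<Longrightarrow> Q (outA xs r as) (outB ys r bs)"
  shows "measure_pmf.prob (protocol_outcome p f k R inA inB outA outB xs ys)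
           {(a, b). Q a b} = 1"
  unfolding protocol_outcome_def
  by (subst measure_pmf.prob_eq_1) (auto simp: AE_measure_pmf_iff assms)

text \<open>If f is not additively separable, the candidate decomposition
  g x = f x 0, h y = f 0 y - f 0 0 fails somewhere, i.e. some mixed difference is
  nonzero modulo p.\<close>
lemma inseparable_witness:
  assumes "\<not> additively_separable p f"
  obtains x1 y1 where "x1 \<in> {0..<int p}" "y1 \<in> {0..<int p}"
    and "\<not> int p dvd f x1 y1 - f x1 0 - f 0 y1 + f 0 0"
proof -
  have "\<not> (\<forall>x\<in>{0..<int p}. \<forall>y\<in>{0..<int p}. [f x y = f x 0 + (f 0 y - f 0 0)] (mod int p))"
    using assms unfolding additively_separable_def
    by (rule contrapos_nn) (rule exI[of _ "\<lambda>x. f x 0"], rule exI[of _ "\<lambda>y. f 0 y - f 0 0"])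
  then obtain x1 y1 where "x1 \<in> {0..<int p}" "y1 \<in> {0..<int p}"
    and "\<not> [f x1 y1 = f x1 0 + (f 0 y1 - f 0 0)] (mod int p)"
    by blast
  with that show ?thesis
    by (simp add: cong_iff_dvd_diff algebra_simps)
qed

lemma square_decomposition:
  assumes "x1 \<in> {0..<int p}" "y1 \<in> {0..<int p}" and "u \<in> {0, 1}" "v \<in> {0, 1}"
  shows "[f (u * x1 mod int p) (v * y1 mod int p)
          = f 0 0 + u * (f x1 0 - f 0 0) + v * (f 0 y1 - f 0 0)
            + u * v * (f x1 y1 - f x1 0 - f 0 y1 + f 0 0)] (mod int p)"
  using assms by (auto simp: cong_def)

text \<open>The list L enumerates input pairs; copy i of the box is devoted to the pair L!i.\<close>
definition tt_inA :: "int \<Rightarrow> ('x \<times> 'y) list \<Rightarrow> 'x \<Rightarrow> nat \<Rightarrow> int list \<Rightarrow> int" where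
  "tt_inA x1 L xs r as = of_bool (fst (L ! length as) = xs) * x1"

definition tt_inB :: "int \<Rightarrow> ('x \<times> 'y) list \<Rightarrow> 'y \<Rightarrow> nat \<Rightarrow> int list \<Rightarrow> int" where
  "tt_inB y1 L ys r bs = of_bool (snd (L ! length bs) = ys) * y1"

text \<open>The outputs remove the affine part of each box difference and combine the
  resulting AND sharings with coefficients c.\<close>
definition tt_outA ::
  "(int \<Rightarrow> int \<Rightarrow> int) \<Rightarrow> int \<Rightarrow> (nat \<Rightarrow> int) \<Rightarrow> ('x \<times> 'y) list \<Rightarrow> 'x \<Rightarrow> nat \<Rightarrow> int list \<Rightarrow> int"
  where "tt_outA f x1 c L xs r as =
    (\<Sum>i<length L. c i * (as!i - f 0 0 - of_bool (fst (L!i) = xs) * (f x1 0 - f 0 0)))"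

definition tt_outB ::
  "(int \<Rightarrow> int \<Rightarrow> int) \<Rightarrow> int \<Rightarrow> (nat \<Rightarrow> int) \<Rightarrow> ('x \<times> 'y) list \<Rightarrow> 'y \<Rightarrow> nat \<Rightarrow> int list \<Rightarrow> int"
  where "tt_outB f y1 c L ys r bs =
    (\<Sum>i<length L. c i * (bs!i + of_bool (snd (L!i) = ys) * (f 0 y1 - f 0 0)))"

lemma sum_select_distinct:
  fixes g :: "nat \<Rightarrow> 'b :: comm_ring_1"
  assumes "distinct L" "j < length L"
  shows "(\<Sum>i<length L. of_bool (L!i = L!j) * g i) = g j"
proof -
  have "(\<Sum>i<length L. of_bool (L!i = L!j) * g i) = (\<Sum>i<length L. if i = j then g i else 0)"
    using assms by (intro sum.cong) (auto simp: nth_eq_iff_index_eq)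
  also have "\<dots> = g j"
    using assms(2) by simp
  finally show ?thesis .
qed

lemma truth_table_outputs:
  assumes x1: "x1 \<in> {0..<int p}" and y1: "y1 \<in> {0..<int p}"
    and L: "distinct L" "j < length L" "L ! j = (xs, ys)"
    and run: "(as, bs) \<in> set_pmf (run_boxes p f (tt_inA x1 L) (tt_inB y1 L) xs ys r (length L))"
  shows "[tt_outA f x1 c L xs r as - tt_outB f y1 c L ys r bs
          = c j * (f x1 y1 - f x1 0 - f 0 y1 + f 0 0)] (mod int p)"
proof -
  define D where "D = f x1 y1 - f x1 0 - f 0 y1 + f 0 0"
  define u where "u i = (of_bool (fst (L!i) = xs) :: int)" for i
  define v where "v i = (of_bool (snd (L!i) = ys) :: int)" for i
  define k where "k = length L"
  from run_boxes_correlation[of p f "tt_inA x1 L" "tt_inB y1 L" xs ys r k] run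
  have len: "length as = k" "length bs = k"
    and box: "\<forall>i<k. [as!i - bs!i = f (tt_inA x1 L xs r (take i as) mod int p)
                                    (tt_inB y1 L ys r (take i bs) mod int p)] (mod int p)"
    by (auto simp: k_def)
  have and_share: "[(as!i - f 0 0 - u i * (f x1 0 - f 0 0)) - (bs!i + v i * (f 0 y1 - f 0 0))
                    = u i * v i * D] (mod int p)" if "i < k" for i
  proof -
    have "[as!i - bs!i = f (u i * x1 mod int p) (v i * y1 mod int p)] (mod int p)"
      using box that len by (simp add: tt_inA_def tt_inB_def u_def v_def min_def)
    also have "[f (u i * x1 mod int p) (v i * y1 mod int p)
                = f 0 0 + u i * (f x1 0 - f 0 0) + v i * (f 0 y1 - f 0 0) + u i * v i * D]
                (mod int p)"
      unfolding D_def by (rule square_decomposition) (use x1 y1 in \<open>auto simp: u_def v_def\<close>)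
    finally show ?thesis
      by (simp add: cong_iff_dvd_diff algebra_simps)
  qed
  have "tt_outA f x1 c L xs r as - tt_outB f y1 c L ys r bs
        = (\<Sum>i<k. c i * ((as!i - f 0 0 - u i * (f x1 0 - f 0 0)) - (bs!i + v i * (f 0 y1 - f 0 0))))"
    unfolding tt_outA_def tt_outB_def u_def v_def k_def sum_subtractf[symmetric]
    by (simp add: algebra_simps)
  also have "[\<dots> = (\<Sum>i<k. of_bool (L!i = L!j) * (c i * D))] (mod int p)"
  proof (rule cong_sum)
    fix i assume "i \<in> {..<k}"
    moreover have "u i * v i = of_bool (L!i = L!j)"
      using L(3) by (cases "L!i") (simp add: u_def v_def)
    ultimately show "[c i * ((as!i - f 0 0 - u i * (f x1 0 - f 0 0)) - (bs!i + v i * (f 0 y1 - f 0 0)))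
                      = of_bool (L!i = L!j) * (c i * D)] (mod int p)"
      using cong_scalar_left[OF and_share, of i "c i"] by (simp add: algebra_simps)
  qed
  also have "(\<Sum>i<k. of_bool (L!i = L!j) * (c i * D)) = c j * D"
    unfolding k_def by (rule sum_select_distinct[OF L(1,2)])
  finally show ?thesis
    by (simp add: D_def)
qed

lemma inverse_mod_prime:
  assumes "prime p" "\<not> int p dvd d"
  obtains e where "[d * e = 1] (mod int p)"
proof -
  have "coprime d (int p)"
    using assms by (meson prime_nat_int_transfer prime_imp_coprime coprime_commute)
  with that show ?thesis
    using cong_solve_coprime_int by blast
qed

lemma finite_Zp_vectors: "finite (Zp_vectors p n)"
  unfolding Zp_vectors_def
  using finite_lists_length_eq[OF finite_atLeastLessThan_int] by (simp add: conj_commute)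

text \<open>Every function F is computed with certainty: the coefficient of the copy devoted
  to the pair (xs, ys) is F xs ys times an inverse of D modulo p.\<close>
theorem theorem1:
  fixes p :: nat and f :: "int \<Rightarrow> int \<Rightarrow> int" and n m :: nat
    and F :: "int list \<Rightarrow> int list \<Rightarrow> int"
  assumes "prime p"
    and "\<not> additively_separable p f"
    and "n \<ge> 1" and "m \<ge> 1"
  shows "\<exists>(k::nat) (R::nat pmf) inA inB outA outB.
           \<forall>xs\<in>Zp_vectors p n. \<forall>ys\<in>Zp_vectors p m.
             measure_pmf.prob (protocol_outcome p f k R inA inB outA outB xs ys)
               {(a, b). [a - b = F xs ys] (mod int p)} = 1"
proof -
  obtain x1 y1 where x1: "x1 \<in> {0..<int p}" and y1: "y1 \<in> {0..<int p}"
    and D: "\<not> int p dvd f x1 y1 - f x1 0 - f 0 y1 + f 0 0"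
    using inseparable_witness[OF assms(2)] .
  obtain e where e: "[(f x1 y1 - f x1 0 - f 0 y1 + f 0 0) * e = 1] (mod int p)"
    using inverse_mod_prime[OF assms(1) D] .
  obtain L where L: "set L = Zp_vectors p n \<times> Zp_vectors p m" "distinct L"
    using finite_distinct_list finite_Zp_vectors finite_SigmaI by metis
  define c where "c i = e * F (fst (L!i)) (snd (L!i))" for i
  show ?thesis
  proof (intro exI ballI)
    fix xs ys assume "xs \<in> Zp_vectors p n" "ys \<in> Zp_vectors p m"
    then obtain j where j: "j < length L" "L ! j = (xs, ys)"
      using L(1) by (metis SigmaI in_set_conv_nth)
    have coeff: "[c j * (f x1 y1 - f x1 0 - f 0 y1 + f 0 0) = F xs ys] (mod int p)"
      using cong_scalar_left[OF e, of "F xs ys"] j(2) by (simp add: c_def algebra_simps)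
    show "measure_pmf.prob (protocol_outcome p f (length L) (return_pmf 0)
                 (tt_inA x1 L) (tt_inB y1 L) (tt_outA f x1 c L) (tt_outB f y1 c L) xs ys)
               {(a, b). [a - b = F xs ys] (mod int p)} = 1"
    proof (rule protocol_prob_one)
      fix r as bs
      assume "r \<in> set_pmf (return_pmf (0::nat))"
        and "(as, bs) \<in> set_pmf (run_boxes p f (tt_inA x1 L) (tt_inB y1 L) xs ys r (length L))"
      from truth_table_outputs[OF x1 y1 L(2) j this(2), of c]
      show "[tt_outA f x1 c L xs r as - tt_outB f y1 c L ys r bs = F xs ys] (mod int p)"
        using coeff by (rule cong_trans)
    qed
  qed
qed

end
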